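(* Let $n\ge1$ and let $G$ be a simple undirected graph with vertex set $[n]$. Suppose its complement $\overline{G}$ satisfies: whenever $\{i,j\}$ is an edge of $\overline{G}$ with $i<j$, every pair $\{a,b\}$ with $i\le a<b\le j$ is an edge of $\overline{G}$. Let $Q(y)=\chi_{\overline{G}}(-y)/y$, which is a polynomial. Then, as formal power series, $$\frac{C_G(x)}{(1-x)^n}=(-1)^n\,n\sum_{m=0}^{\infty}Q(m)\,x^m.$$
   Context: $\overline{G}$ is the complement of $G$ (same vertex set; $\{a,b\}$ is an edge iff it is not an edge of $G$), and $\chi_{\overline{G}}$ is its chromatic polynomial. For a permutation $\sigma$ of $[n]$ (viewed as the word $\sigma(1)\sigma(2)\cdots\sigma(n)$), set $\sigma(n+1)=\sigma(1)$. The number of $G$-cyclic-descents $\mathrm{cdes}_G(\sigma)$ is the number of $1\le i\le n$ such that $\sigma(i)>\sigma(i+1)$ and $\{\sigma(i),\sigma(i+1)\}$ is an edge of $G$. The generalized cyclic Eulerian polynomial is $C_G(x)=\sum_{\sigma\in S_n}x^{\mathrm{cdes}_G(\sigma)}$, where $S_n$ is the set of permutations of $[n]$. *)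

theory Defs
  imports "HOL-Computational_Algebra.Computational_Algebra" "HOL-Combinatorics.Permutations"
begin

definition simple_graph_on :: "nat \<Rightarrow> (nat \<Rightarrow> nat \<Rightarrow> bool) \<Rightarrow> bool" where
  "simple_graph_on n E \<longleftrightarrow> (\<forall>a b. E a b \<longrightarrow> E b a) \<and> (\<forall>a. \<not> E a a)
     \<and> (\<forall>a b. E a b \<longrightarrow> a \<in> {1..n} \<and> b \<in> {1..n})"

definition compl_graph :: "nat \<Rightarrow> (nat \<Rightarrow> nat \<Rightarrow> bool) \<Rightarrow> nat \<Rightarrow> nat \<Rightarrow> bool" where
  "compl_graph n E a b \<longleftrightarrow> a \<in> {1..n} \<and> b \<in> {1..n} \<and> a \<noteq> b \<and> \<not> E a b"

definition num_colorings :: "'a set \<Rightarrow> ('a \<Rightarrow> 'a \<Rightarrow> bool) \<Rightarrow> nat \<Rightarrow> nat" where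
  "num_colorings V E k = card {c \<in> V \<rightarrow>\<^sub>E {..<k}. \<forall>a\<in>V. \<forall>b\<in>V. E a b \<longrightarrow> c a \<noteq> c b}"

text \<open>Chromatic polynomial: the polynomial agreeing with the number of proper colourings
  at every natural number (unique since a polynomial is determined by infinitely many values).\<close>
definition chromatic_poly :: "'a set \<Rightarrow> ('a \<Rightarrow> 'a \<Rightarrow> bool) \<Rightarrow> rat poly" where
  "chromatic_poly V E = (THE p. \<forall>k::nat. poly p (of_nat k) = of_nat (num_colorings V E k))"

definition cdes :: "nat \<Rightarrow> (nat \<Rightarrow> nat \<Rightarrow> bool) \<Rightarrow> (nat \<Rightarrow> nat) \<Rightarrow> nat" where
  "cdes n E \<sigma> = card {i \<in> {1..n}. let j = (if i = n then 1 else i + 1) in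
       \<sigma> i > \<sigma> j \<and> E (\<sigma> i) (\<sigma> j)}"

definition cyc_eulerian :: "nat \<Rightarrow> (nat \<Rightarrow> nat \<Rightarrow> bool) \<Rightarrow> rat poly" where
  "cyc_eulerian n E = (\<Sum>\<sigma>\<in>{\<sigma>. \<sigma> permutes {1..n}}. monom 1 (cdes n E \<sigma>))"

definition Q_poly :: "nat \<Rightarrow> (nat \<Rightarrow> nat \<Rightarrow> bool) \<Rightarrow> rat poly" where
  "Q_poly n E = pcompose (chromatic_poly {1..n} (compl_graph n E)) [:0, -1:] div [:0, 1:]"

end

theory Submission
  imports Defs "HOL-Combinatorics.Multiset_Permutations"
begin

text \<open>Rotating a permutation so that the letter 1 comes first shows \<open>C\<^sub>G = n F\<^sub>n\<close>, where
  \<open>F\<^sub>j\<close> is the descent generating function of the cyclic words \<open>1 r\<close> with \<open>r\<close> a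
  permutation of \<open>{2..j}\<close>. Inserting the largest letter \<open>j\<close> into one of the \<open>j - 1\<close> gaps
  of such a word keeps its number of cyclic \<open>G\<close>-descents or raises it by one, because the
  interval condition makes every smaller \<open>G\<close>-neighbour of a letter \<open>x < j\<close> also a
  \<open>G\<close>-neighbour of \<open>j\<close>. Counting gaps gives a first-order differential recursion for \<open>F\<^sub>j\<close>,
  solved by \<open>F\<^sub>j = (1 - x)\<^sup>j G\<^sub>j\<close> with \<open>G\<^sub>j = \<Sum>\<^sub>m (m + a\<^sub>2) \<cdots> (m + a\<^sub>j) x\<^sup>m\<close>,
  where \<open>a\<^sub>i\<close> counts the neighbours of \<open>i\<close> in the complement of \<open>G\<close> that are smaller
  than \<open>i\<close>. The same condition makes these lower neighbourhoods cliques of the complement, so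
  colouring greedily in the order \<open>1, \<dots>, n\<close> gives \<open>\<chi>(k) = (k - a\<^sub>1) \<cdots> (k - a\<^sub>n)\<close>
  with \<open>a\<^sub>1 = 0\<close>, i.e. \<open>Q(m) = (-1)\<^sup>n (m + a\<^sub>2) \<cdots> (m + a\<^sub>n)\<close>.\<close>

section \<open>Cyclic descents of words\<close>

lemma bij_betw_if_inj_card:
  assumes "inj_on f A" "f ` A \<subseteq> B" "finite B" "card A = card B"
  shows "bij_betw f A B"
  using assms card_image card_subset_eq unfolding bij_betw_def by metis

lemma bij_betw_if_image_card:
  assumes "finite A" "f ` A = B" "card B = card A"
  shows "bij_betw f A B"
  using assms inj_on_iff_eq_card unfolding bij_betw_def by blast

definition desc_edge :: "(nat \<Rightarrow> nat \<Rightarrow> bool) \<Rightarrow> nat \<Rightarrow> nat \<Rightarrow> nat" where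
  "desc_edge E x y = (if y < x \<and> E x y then 1 else 0)"

fun graph_des :: "(nat \<Rightarrow> nat \<Rightarrow> bool) \<Rightarrow> nat list \<Rightarrow> nat" where
  "graph_des E (x # y # w) = desc_edge E x y + graph_des E (y # w)"
| "graph_des E _ = 0"

definition graph_cdes :: "(nat \<Rightarrow> nat \<Rightarrow> bool) \<Rightarrow> nat list \<Rightarrow> nat" where
  "graph_cdes E w = graph_des E (w @ [hd w])"

lemma graph_des_append:
  "u \<noteq> [] \<Longrightarrow> v \<noteq> [] \<Longrightarrow>
     graph_des E (u @ v) = graph_des E u + desc_edge E (last u) (hd v) + graph_des E v"
proof (induction u)
  case (Cons x u)
  then show ?case by (cases u; cases v) auto
qed simp

lemma graph_des_conv_sum:
  "graph_des E w = (\<Sum>i<length w - 1. desc_edge E (w ! i) (w ! Suc i))"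
  by (induction E w rule: graph_des.induct) (simp_all add: sum.lessThan_Suc_shift del: sum.lessThan_Suc)

lemma graph_cdes_rotate1: "graph_cdes E (rotate1 w) = graph_cdes E w"
proof (cases w)
  case (Cons x xs)
  show ?thesis
  proof (cases "xs = []")
    case False
    have "graph_cdes E w = desc_edge E x (hd xs) + graph_des E xs + desc_edge E (last xs) x"
      using graph_des_append[of "[x]" "xs @ [x]" E] graph_des_append[of xs "[x]" E] False Cons
      by (simp add: graph_cdes_def)
    moreover have "graph_cdes E (rotate1 w) = graph_des E xs + desc_edge E (last xs) x + desc_edge E x (hd xs)"
      using graph_des_append[of xs "[x, hd xs]" E] False Cons by (simp add: graph_cdes_def)
    ultimately show ?thesis by simp
  qed (simp add: Cons)
qed simp

lemma graph_cdes_rotate: "graph_cdes E (rotate k w) = graph_cdes E w"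
  by (induction k) (simp_all add: graph_cdes_rotate1)

lemma cdes_eq_graph_cdes:
  assumes "1 \<le> n"
  shows "cdes n E \<sigma> = graph_cdes E (map \<sigma> [1..<Suc n])"
proof -
  define w where "w = map \<sigma> [1..<Suc n] @ [\<sigma> 1]"
  have w_nth: "w ! i = \<sigma> (if i = n then 1 else Suc i)" if "i \<le> n" for i
    using that by (auto simp: w_def nth_append simp del: upt_Suc)
  have "cdes n E \<sigma> = (\<Sum>i\<in>{1..n}. desc_edge E (\<sigma> i) (\<sigma> (if i = n then 1 else Suc i)))"
    unfolding cdes_def desc_edge_def Let_def by (simp add: sum.inter_filter[symmetric])
  also have "\<dots> = (\<Sum>i<n. desc_edge E (w ! i) (w ! Suc i))"
    using w_nth by (simp add: sum.atLeast1_atMost_eq)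
  also have "\<dots> = graph_des E w"
    by (simp add: graph_des_conv_sum w_def del: upt_Suc)
  also have "w = map \<sigma> [1..<Suc n] @ [hd (map \<sigma> [1..<Suc n])]"
    using assms by (simp add: w_def upt_rec)
  finally show ?thesis by (simp add: graph_cdes_def)
qed

lemma bij_betw_map_permutes:
  "bij_betw (\<lambda>\<sigma>. map \<sigma> [1..<Suc n]) {\<sigma>. \<sigma> permutes {1..n}} (permutations_of_set {1..n})"
proof (rule bij_betw_if_inj_card)
  show "inj_on (\<lambda>\<sigma>. map \<sigma> [1..<Suc n]) {\<sigma>. \<sigma> permutes {1..n}}"
  proof (rule inj_onI, rule ext)
    fix \<sigma> \<tau> x
    assume "\<sigma> \<in> {\<sigma>. \<sigma> permutes {1..n}}" "\<tau> \<in> {\<sigma>. \<sigma> permutes {1..n}}"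
      and "map \<sigma> [1..<Suc n] = map \<tau> [1..<Suc n]"
    then show "\<sigma> x = \<tau> x"
      by (cases "x \<in> {1..n}") (auto simp: map_eq_conv permutes_not_in simp del: upt_Suc)
  qed
  show "(\<lambda>\<sigma>. map \<sigma> [1..<Suc n]) ` {\<sigma>. \<sigma> permutes {1..n}} \<subseteq> permutations_of_set {1..n}"
    by (auto simp: permutations_of_set_def atLeastLessThanSuc_atLeastAtMost permutes_image
        distinct_map permutes_inj_on simp del: upt_Suc)
qed (simp_all add: card_permutations)

lemma bij_betw_rotate_rooted:
  assumes "1 \<le> n"
  shows "bij_betw (\<lambda>(r, k). rotate k (1 # r)) (permutations_of_set {2..n} \<times> {1..n})
           (permutations_of_set {1..n})"
proof (rule bij_betw_if_image_card)
  have ins1: "insert 1 {2..n} = {1..n}" using assms by auto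
  show "(\<lambda>(r, k). rotate k (1 # r)) ` (permutations_of_set {2..n} \<times> {1..n}) = permutations_of_set {1..n}"
  proof (intro equalityI subsetI)
    fix w assume "w \<in> permutations_of_set {1..n}"
    then have w: "set w = {1..n}" "distinct w" by (auto dest: permutations_of_setD)
    then obtain u v where uv: "w = u @ 1 # v" using assms by (metis atLeastAtMost_iff le_refl split_list)
    have "set (v @ u) = set w - {1}"
      using w uv by auto
    also have "\<dots> = {2..n}"
      using w by auto
    finally have "v @ u \<in> permutations_of_set {2..n}"
      using w uv by (auto simp: permutations_of_set_def)
    moreover have "length (1 # v) \<in> {1..n}"
      using w uv distinct_card[OF w(2)] by auto
    moreover have "w = rotate (length (1 # v)) (1 # v @ u)"
      using uv rotate_append[of "1 # v" u] by simp
    ultimately show "w \<in> (\<lambda>(r, k). rotate k (1 # r)) ` (permutations_of_set {2..n} \<times> {1..n})"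
      by force
  qed (auto simp: permutations_of_set_def ins1[symmetric])
  show "card (permutations_of_set {1..n}) = card (permutations_of_set {2..n} \<times> {1..n})"
    using assms by (simp add: card_cartesian_product fact_reduce[of n])
qed simp

definition rooted_cdes_fps :: "(nat \<Rightarrow> nat \<Rightarrow> bool) \<Rightarrow> nat \<Rightarrow> rat fps" where
  "rooted_cdes_fps E j = (\<Sum>r\<in>permutations_of_set {2..j}. fps_X ^ graph_cdes E (1 # r))"

lemma fps_cyc_eulerian:
  assumes "1 \<le> n"
  shows "fps_of_poly (cyc_eulerian n E) = of_nat n * rooted_cdes_fps E n"
proof -
  have "fps_of_poly (cyc_eulerian n E) = (\<Sum>\<sigma> | \<sigma> permutes {1..n}. fps_X ^ graph_cdes E (map \<sigma> [1..<Suc n]))"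
    using cdes_eq_graph_cdes[OF assms]
    by (simp add: cyc_eulerian_def fps_of_poly_sum fps_of_poly_monom')
  also have "\<dots> = (\<Sum>w\<in>permutations_of_set {1..n}. fps_X ^ graph_cdes E w)"
    by (rule sum.reindex_bij_betw[OF bij_betw_map_permutes])
  also have "\<dots> = (\<Sum>(r, k)\<in>permutations_of_set {2..n} \<times> {1..n}. fps_X ^ graph_cdes E (rotate k (1 # r)))"
    using sum.reindex_bij_betw[OF bij_betw_rotate_rooted[OF assms], of "\<lambda>w. fps_X ^ graph_cdes E w", symmetric]
    by (simp add: case_prod_unfold)
  also have "\<dots> = of_nat n * rooted_cdes_fps E n"
    by (simp add: sum.cartesian_product[symmetric] graph_cdes_rotate rooted_cdes_fps_def sum_distrib_left)
  finally show ?thesis .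
qed

section \<open>Inserting the largest letter\<close>

definition insert_at :: "nat \<Rightarrow> 'a \<Rightarrow> 'a list \<Rightarrow> 'a list" where
  "insert_at p x w = take p w @ x # drop p w"

lemma graph_des_insert:
  assumes "u \<noteq> []" "v \<noteq> []" "last u < j"
  shows "graph_des E (u @ j # v) + desc_edge E (last u) (hd v)
       = graph_des E (u @ v) + desc_edge E j (hd v)"
  using graph_des_append[OF assms(1), of "j # v" E] graph_des_append[OF assms(1,2), of E] assms(2,3)
  by (cases v) (auto simp: desc_edge_def)

lemma bij_betw_insert_at:
  assumes "finite A" "j \<notin> A"
  shows "bij_betw (\<lambda>(r, p). insert_at p j r) (SIGMA r:permutations_of_set A. {..length r})
           (permutations_of_set (insert j A))"
proof (rule bij_betw_if_image_card)
  show "(\<lambda>(r, p). insert_at p j r) ` (SIGMA r:permutations_of_set A. {..length r})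
      = permutations_of_set (insert j A)"
  proof (intro equalityI subsetI)
    fix w assume "w \<in> permutations_of_set (insert j A)"
    then have w: "set w = insert j A" "distinct w" by (auto dest: permutations_of_setD)
    then obtain u v where uv: "w = u @ j # v" by (metis insertI1 split_list)
    then have "u @ v \<in> permutations_of_set A" and "w = insert_at (length u) j (u @ v)"
      using w assms(2) by (auto simp: permutations_of_set_def insert_at_def)
    then show "w \<in> (\<lambda>(r, p). insert_at p j r) ` (SIGMA r:permutations_of_set A. {..length r})"
      by force
  next
    fix w assume "w \<in> (\<lambda>(r, p). insert_at p j r) ` (SIGMA r:permutations_of_set A. {..length r})"
    then obtain r p where "r \<in> permutations_of_set A" "w = take p r @ j # drop p r"
      by (auto simp: insert_at_def)
    then show "w \<in> permutations_of_set (insert j A)"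
      using assms(2) set_take_disj_set_drop_if_distinct[of r p p]
      by (auto simp: permutations_of_set_def dest: in_set_takeD in_set_dropD)
        (metis append_take_drop_id Un_iff set_append)+
  qed
  have "card (SIGMA r:permutations_of_set A. {..length r}) = fact (card A) * Suc (card A)"
    using assms(1) by (simp add: card_SigmaI length_finite_permutations_of_set)
  then show "card (permutations_of_set (insert j A)) = card (SIGMA r:permutations_of_set A. {..length r})"
    using assms by simp
qed simp

definition lower_nonadj :: "(nat \<Rightarrow> nat \<Rightarrow> bool) \<Rightarrow> nat \<Rightarrow> nat" where
  "lower_nonadj E j = card {i \<in> {1..<j}. \<not> E j i}"

definition lower_adj_mono :: "(nat \<Rightarrow> nat \<Rightarrow> bool) \<Rightarrow> nat \<Rightarrow> bool" where
  "lower_adj_mono E j \<longleftrightarrow> (\<forall>x y. 1 \<le> y \<longrightarrow> y < x \<longrightarrow> x < j \<longrightarrow> E x y \<longrightarrow> E j y)"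

lemma graph_cdes_insert_at:
  assumes "p \<le> length r" "\<forall>z\<in>set r. z < j" "1 < j"
  shows "graph_cdes E (1 # insert_at p j r) + desc_edge E ((1 # r) ! p) ((r @ [1]) ! p)
       = graph_cdes E (1 # r) + desc_edge E j ((r @ [1]) ! p)"
proof -
  define u where "u = 1 # take p r"
  define v where "v = drop p r @ [1]"
  have last_u: "last u = (1 # r) ! p"
    using assms(1) by (cases p) (auto simp: u_def take_Suc_conv_app_nth)
  have "last u < j"
    using assms by (cases p) (auto simp: last_u)
  moreover have "hd v = (r @ [1]) ! p"
    using assms(1) by (auto simp: v_def hd_append nth_append hd_drop_conv_nth)
  moreover have "graph_cdes E (1 # insert_at p j r) = graph_des E (u @ j # v)"
    by (simp add: graph_cdes_def u_def v_def insert_at_def)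
  moreover have "graph_cdes E (1 # r) = graph_des E (u @ v)"
    by (simp add: graph_cdes_def u_def v_def flip: append_assoc)
  moreover have "u \<noteq> []" "v \<noteq> []"
    by (simp_all add: u_def v_def)
  ultimately show ?thesis
    using graph_des_insert[of u v j E] last_u by simp
qed

lemma sum_desc_edge_gaps:
  "(\<Sum>p\<le>length r. desc_edge E ((1 # r) ! p) ((r @ [1]) ! p)) = graph_cdes E (1 # r)"
  unfolding graph_cdes_def graph_des_conv_sum lessThan_Suc_atMost[symmetric]
  by (intro sum.cong) (auto simp: nth_Cons' nth_append)

lemma sum_desc_edge_largest:
  assumes "r \<in> permutations_of_set {2..<j}" "2 \<le> j"
  shows "(\<Sum>p\<le>length r. desc_edge E j ((r @ [1]) ! p)) + lower_nonadj E j = j - 1"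
proof -
  have r1: "set (r @ [1]) = {1..<j}" "distinct (r @ [1])"
    using assms by (auto simp: permutations_of_set_def)
  then have "bij_betw ((!) (r @ [1])) {..length r} {1..<j}"
    using bij_betw_nth[of "r @ [1]" "{..<length (r @ [1])}"] by (simp add: lessThan_Suc_atMost)
  then have "(\<Sum>p\<le>length r. desc_edge E j ((r @ [1]) ! p)) = (\<Sum>z\<in>{1..<j}. desc_edge E j z)"
    by (rule sum.reindex_bij_betw)
  moreover have "lower_nonadj E j = (\<Sum>z\<in>{1..<j}. 1 - desc_edge E j z)"
    unfolding lower_nonadj_def card_eq_sum sum.inter_filter[OF finite_atLeastLessThan]
    by (intro sum.cong) (auto simp: desc_edge_def)
  ultimately show ?thesis
    by (simp add: sum.distrib[symmetric] desc_edge_def)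
qed

lemma desc_edge_le_desc_edge_largest:
  "lower_adj_mono E j \<Longrightarrow> x < j \<Longrightarrow> 1 \<le> y \<Longrightarrow> desc_edge E x y \<le> desc_edge E j y"
  by (auto simp: lower_adj_mono_def desc_edge_def)

lemma fps_X_power_add_diff:
  assumes "c \<le> e" "e \<le> (1::nat)"
  shows "(fps_X::rat fps) ^ (d + e - c) = fps_X ^ d * (1 + (of_nat e - of_nat c) * (fps_X - 1))"
  using assms by (cases e; cases c) (auto simp: algebra_simps)

lemma sum_fps_insert_at:
  fixes j :: nat
  assumes r: "r \<in> permutations_of_set {2..<j}" and j: "2 \<le> j" and mono: "lower_adj_mono E j"
  defines "d \<equiv> graph_cdes E (1 # r)"
  shows "(\<Sum>p\<le>length r. (fps_X::rat fps) ^ graph_cdes E (1 # insert_at p j r))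
       = fps_X ^ d * (of_nat (j - 1) + (of_nat (j - 1) - of_nat (lower_nonadj E j) - of_nat d) * (fps_X - 1))"
proof -
  define c where "c p = desc_edge E ((1 # r) ! p) ((r @ [1]) ! p)" for p
  define e where "e p = desc_edge E j ((r @ [1]) ! p)" for p
  have set_r: "set r = {2..<j}" and len_r: "Suc (length r) = j - 1"
    using r j length_finite_permutations_of_set[OF r] by (auto dest: permutations_of_setD)
  have step: "(fps_X::rat fps) ^ graph_cdes E (1 # insert_at p j r)
      = fps_X ^ d * (1 + (of_nat (e p) - of_nat (c p)) * (fps_X - 1))" if "p \<le> length r" for p
  proof -
    have "(1 # r) ! p < j" "1 \<le> (r @ [1]) ! p"
      using that set_r j nth_mem[of "p - 1" r] nth_mem[of p r]
      by (cases p; auto simp: nth_append)+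
    then have "c p \<le> e p"
      unfolding c_def e_def using desc_edge_le_desc_edge_largest[OF mono] by blast
    moreover have "graph_cdes E (1 # insert_at p j r) = d + e p - c p"
      using graph_cdes_insert_at[OF that, of j E] set_r j unfolding c_def e_def d_def by auto
    moreover have "e p \<le> 1"
      by (simp add: e_def desc_edge_def)
    ultimately show ?thesis
      by (simp add: fps_X_power_add_diff)
  qed
  have "(\<Sum>p\<le>length r. (fps_X::rat fps) ^ graph_cdes E (1 # insert_at p j r))
      = (\<Sum>p\<le>length r. fps_X ^ d * (1 + (of_nat (e p) - of_nat (c p)) * (fps_X - 1)))"
    by (rule sum.cong[OF refl step]) simp
  also have "\<dots> = fps_X ^ d * (of_nat (Suc (length r))
      + (of_nat (\<Sum>p\<le>length r. e p) - of_nat (\<Sum>p\<le>length r. c p)) * (fps_X - 1))"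
    by (simp add: sum_distrib_left[symmetric] sum.distrib sum_subtractf sum_distrib_right[symmetric])
  moreover have "(\<Sum>p\<le>length r. c p) = d"
    unfolding c_def d_def by (rule sum_desc_edge_gaps)
  moreover have "(of_nat (\<Sum>p\<le>length r. e p) :: rat fps) = of_nat (j - 1) - of_nat (lower_nonadj E j)"
    using arg_cong[OF sum_desc_edge_largest[OF r j, of E], of "of_nat :: nat \<Rightarrow> rat fps"]
    unfolding e_def by (simp add: algebra_simps)
  ultimately show ?thesis
    by (simp add: len_r)
qed

lemma fps_X_mult_deriv_nth: "(fps_X * fps_deriv f) $ m = of_nat m * f $ m"
  by (cases m) (simp_all add: fps_X_mult_nth fps_deriv_nth)

lemma fps_X_mult_deriv_power: "fps_X * fps_deriv ((fps_X :: 'a::comm_ring_1 fps) ^ d) = of_nat d * fps_X ^ d"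
  by (rule fps_ext) (simp add: fps_X_mult_deriv_nth fps_X_power_nth fps_of_nat)

lemma rooted_cdes_fps_rec:
  assumes j: "2 \<le> j" and mono: "lower_adj_mono E j"
  shows "rooted_cdes_fps E j
       = (of_nat (j - 1) + (of_nat (j - 1) - of_nat (lower_nonadj E j)) * (fps_X - 1)) * rooted_cdes_fps E (j - 1)
         - (fps_X - 1) * (fps_X * fps_deriv (rooted_cdes_fps E (j - 1)))"
proof -
  have ins_j: "insert j {2..<j} = {2..j}" and prev: "{2..j - 1} = {2..<j}"
    using j by auto
  have "rooted_cdes_fps E j
      = (\<Sum>(r, p)\<in>(SIGMA r:permutations_of_set {2..<j}. {..length r}). fps_X ^ graph_cdes E (1 # insert_at p j r))"
    using sum.reindex_bij_betw[OF bij_betw_insert_at[of "{2..<j}" j], of "\<lambda>w. fps_X ^ graph_cdes E (1 # w)", symmetric]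
    by (simp add: rooted_cdes_fps_def ins_j case_prod_unfold)
  also have "\<dots> = (\<Sum>r\<in>permutations_of_set {2..<j}. \<Sum>p\<le>length r. fps_X ^ graph_cdes E (1 # insert_at p j r))"
    by (simp add: sum.Sigma)
  also have "\<dots> = (\<Sum>r\<in>permutations_of_set {2..<j}. fps_X ^ graph_cdes E (1 # r)
      * (of_nat (j - 1) + (of_nat (j - 1) - of_nat (lower_nonadj E j) - of_nat (graph_cdes E (1 # r))) * (fps_X - 1)))"
    by (intro sum.cong refl sum_fps_insert_at j mono)
  also have "\<dots> = (\<Sum>r\<in>permutations_of_set {2..<j}.
        (of_nat (j - 1) + (of_nat (j - 1) - of_nat (lower_nonadj E j)) * (fps_X - 1)) * fps_X ^ graph_cdes E (1 # r)
        - (fps_X - 1) * (of_nat (graph_cdes E (1 # r)) * fps_X ^ graph_cdes E (1 # r)))"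
    by (intro sum.cong) (simp_all add: algebra_simps)
  also have "\<dots> = (of_nat (j - 1) + (of_nat (j - 1) - of_nat (lower_nonadj E j)) * (fps_X - 1)) * rooted_cdes_fps E (j - 1)
      - (fps_X - 1) * (\<Sum>r\<in>permutations_of_set {2..<j}. of_nat (graph_cdes E (1 # r)) * fps_X ^ graph_cdes E (1 # r))"
    unfolding rooted_cdes_fps_def prev by (simp add: sum_subtractf sum_distrib_left)
  also have "(\<Sum>r\<in>permutations_of_set {2..<j}. of_nat (graph_cdes E (1 # r)) * fps_X ^ graph_cdes E (1 # r))
      = fps_X * fps_deriv (rooted_cdes_fps E (j - 1))"
    unfolding rooted_cdes_fps_def prev by (simp add: fps_deriv_sum sum_distrib_left fps_X_mult_deriv_power)
  finally show ?thesis .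
qed

section \<open>Solving the recursion\<close>

definition lower_nonadj_fps :: "(nat \<Rightarrow> nat \<Rightarrow> bool) \<Rightarrow> nat \<Rightarrow> rat fps" where
  "lower_nonadj_fps E j = Abs_fps (\<lambda>m. of_nat (\<Prod>i\<in>{2..j}. m + lower_nonadj E i))"

lemma lower_nonadj_fps_rec:
  assumes "2 \<le> j"
  shows "lower_nonadj_fps E j
       = of_nat (lower_nonadj E j) * lower_nonadj_fps E (j - 1) + fps_X * fps_deriv (lower_nonadj_fps E (j - 1))"
proof (rule fps_ext)
  fix m
  have "{2..j} = insert j {2..j - 1}"
    using assms by auto
  then have "(\<Prod>i\<in>{2..j}. m + lower_nonadj E i) = (m + lower_nonadj E j) * (\<Prod>i\<in>{2..j - 1}. m + lower_nonadj E i)"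
    using assms by simp
  then show "lower_nonadj_fps E j $ m = (of_nat (lower_nonadj E j) * lower_nonadj_fps E (j - 1)
      + fps_X * fps_deriv (lower_nonadj_fps E (j - 1))) $ m"
    by (simp add: lower_nonadj_fps_def fps_X_mult_deriv_nth fps_of_nat algebra_simps del: of_nat_prod)
qed

lemma euler_step_one_minus_X_power:
  fixes G A :: "'a::comm_ring_1 fps"
  assumes "1 \<le> k"
  shows "(of_nat k + (of_nat k - A) * (fps_X - 1)) * (G * (1 - fps_X) ^ k)
         - (fps_X - 1) * (fps_X * fps_deriv (G * (1 - fps_X) ^ k))
       = (A * G + fps_X * fps_deriv G) * (1 - fps_X) ^ Suc k"
proof -
  define P where "P = (1 - fps_X :: 'a fps) ^ (k - 1)"
  have power_k: "(1 - fps_X :: 'a fps) ^ k = (1 - fps_X) * P"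
    using assms by (cases k) (simp_all add: P_def)
  have deriv_k: "fps_deriv ((1 - fps_X) ^ k :: 'a fps) = - of_nat k * P"
    by (simp add: P_def fps_deriv_power fps_of_nat)
  show ?thesis
    unfolding fps_deriv_mult deriv_k unfolding power_Suc power_k by (simp add: algebra_simps)
qed

lemma rooted_cdes_fps_eq:
  assumes "1 \<le> j" "\<forall>i\<in>{2..j}. lower_adj_mono E i"
  shows "rooted_cdes_fps E j = lower_nonadj_fps E j * (1 - fps_X) ^ j"
  using assms
proof (induction j rule: nat_induct_at_least)
  case base
  have "lower_nonadj_fps E 1 * (1 - fps_X) = 1"
    by (intro fps_ext) (auto simp: lower_nonadj_fps_def fps_X_mult_right_nth algebra_simps)
  then show ?case
    by (simp add: rooted_cdes_fps_def graph_cdes_def desc_edge_def)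
next
  case (Suc k)
  then have "rooted_cdes_fps E (Suc k)
      = (of_nat k + (of_nat k - of_nat (lower_nonadj E (Suc k))) * (fps_X - 1)) * (lower_nonadj_fps E k * (1 - fps_X) ^ k)
        - (fps_X - 1) * (fps_X * fps_deriv (lower_nonadj_fps E k * (1 - fps_X) ^ k))"
    using rooted_cdes_fps_rec[of "Suc k" E] by simp
  also have "\<dots> = lower_nonadj_fps E (Suc k) * (1 - fps_X) ^ Suc k"
    using euler_step_one_minus_X_power[OF Suc.hyps] lower_nonadj_fps_rec[of "Suc k" E] Suc.hyps by simp
  finally show ?case .
qed

section \<open>Greedy colouring of the complement\<close>

definition proper_colourings :: "'a set \<Rightarrow> ('a \<Rightarrow> 'a \<Rightarrow> bool) \<Rightarrow> nat \<Rightarrow> ('a \<Rightarrow> nat) set" where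
  "proper_colourings V H k = {c \<in> V \<rightarrow>\<^sub>E {..<k}. \<forall>a\<in>V. \<forall>b\<in>V. H a b \<longrightarrow> c a \<noteq> c b}"

lemma finite_proper_colourings: "finite V \<Longrightarrow> finite (proper_colourings V H k)"
  unfolding proper_colourings_def by (rule finite_subset[of _ "V \<rightarrow>\<^sub>E {..<k}"]) (auto intro: finite_PiE)

lemma inj_on_proper_colouring_clique:
  assumes "c \<in> proper_colourings V H k" "K \<subseteq> V" "\<forall>a\<in>K. \<forall>b\<in>K. a \<noteq> b \<longrightarrow> H a b"
  shows "inj_on c K"
  using assms unfolding proper_colourings_def inj_on_def by blast

lemma card_clique_le_colours:
  assumes "c \<in> proper_colourings V H k" "K \<subseteq> V" "\<forall>a\<in>K. \<forall>b\<in>K. a \<noteq> b \<longrightarrow> H a b"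
  shows "card K \<le> k"
  using card_inj_on_le[OF inj_on_proper_colouring_clique[OF assms], of "{..<k}"] assms(1,2)
  by (auto simp: proper_colourings_def PiE_iff)

lemma proper_colourings_insert:
  assumes "x \<notin> V" "symp H" "\<not> H x x"
  shows "proper_colourings (insert x V) H k
       = (\<lambda>(c, y). c(x := y)) ` (SIGMA c:proper_colourings V H k. {..<k} - c ` {v \<in> V. H v x})"
proof (intro equalityI subsetI)
  fix c' assume c': "c' \<in> proper_colourings (insert x V) H k"
  define c where "c = c'(x := undefined)"
  have "c \<in> proper_colourings V H k"
    using c' assms(1) fun_upd_in_PiE[OF assms(1)] by (auto simp: proper_colourings_def c_def)
  moreover have "c' x \<in> {..<k} - c ` {v \<in> V. H v x}"
    using c' assms(1) by (auto simp: proper_colourings_def c_def)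
  moreover have "c' = c(x := c' x)"
    by (simp add: c_def)
  ultimately show "c' \<in> (\<lambda>(c, y). c(x := y)) ` (SIGMA c:proper_colourings V H k. {..<k} - c ` {v \<in> V. H v x})"
    by (intro image_eqI[of _ _ "(c, c' x)"]) auto
next
  fix c' assume "c' \<in> (\<lambda>(c, y). c(x := y)) ` (SIGMA c:proper_colourings V H k. {..<k} - c ` {v \<in> V. H v x})"
  then obtain c y where c: "c \<in> proper_colourings V H k" and y: "y < k" "y \<notin> c ` {v \<in> V. H v x}"
    and c': "c' = c(x := y)" by auto
  have "c' \<in> insert x V \<rightarrow>\<^sub>E {..<k}"
    using PiE_fun_upd[of y "\<lambda>_. {..<k}" x c V] c y(1) by (simp add: c' proper_colourings_def)
  moreover have "c' a \<noteq> c' b" if "a \<in> insert x V" "b \<in> insert x V" "H a b" for a b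
    using that sympD[OF assms(2) that(3)] c y assms(1,3) by (auto simp: c' proper_colourings_def)
  ultimately show "c' \<in> proper_colourings (insert x V) H k"
    by (auto simp: proper_colourings_def)
qed

lemma card_proper_colourings_insert:
  assumes "finite V" "x \<notin> V" "symp H" "\<not> H x x"
    and clique: "\<forall>a\<in>N. \<forall>b\<in>N. a \<noteq> b \<longrightarrow> H a b"
    and N: "N = {v \<in> V. H v x}"
  shows "card (proper_colourings (insert x V) H k) = card (proper_colourings V H k) * (k - card N)"
proof -
  let ?f = "\<lambda>(c, y). c(x := y)"
  let ?S = "SIGMA c:proper_colourings V H k. {..<k} - c ` N"
  have N_sub: "N \<subseteq> V"
    using N by blast
  have "inj_on ?f ?S"
  proof (rule inj_on_inverseI)
    fix p assume "p \<in> ?S"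
    then have "fst p x = undefined"
      using assms(2) by (auto simp: proper_colourings_def PiE_def extensional_def)
    then show "(\<lambda>c'. (c'(x := undefined), c' x)) (?f p) = p"
      by (simp add: case_prod_unfold fun_upd_idem)
  qed
  then have "card (proper_colourings (insert x V) H k) = card ?S"
    using proper_colourings_insert[OF assms(2-4), of k] N by (simp add: card_image)
  also have "\<dots> = (\<Sum>c\<in>proper_colourings V H k. card ({..<k} - c ` N))"
    by (simp add: card_SigmaI finite_proper_colourings[OF assms(1)])
  also have "\<dots> = (\<Sum>c\<in>proper_colourings V H k. k - card N)"
  proof (rule sum.cong)
    fix c assume c: "c \<in> proper_colourings V H k"
    have "c ` N \<subseteq> {..<k}"
      using c N_sub by (force simp: proper_colourings_def dest: PiE_mem)
    moreover have "inj_on c N"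
      using inj_on_proper_colouring_clique[OF c N_sub clique] .
    ultimately show "card ({..<k} - c ` N) = k - card N"
      by (simp add: card_Diff_subset finite_subset card_image)
  qed simp
  finally show ?thesis
    by simp
qed

lemma symp_swap_iff: "symp R \<Longrightarrow> R a b \<longleftrightarrow> R b a"
  by (blast dest: sympD)

definition interval_closed :: "(nat \<Rightarrow> nat \<Rightarrow> bool) \<Rightarrow> bool" where
  "interval_closed H \<longleftrightarrow> (\<forall>i j. i < j \<and> H i j \<longrightarrow> (\<forall>a b. i \<le> a \<and> a < b \<and> b \<le> j \<longrightarrow> H a b))"

lemma symp_compl_graph: "symp E \<Longrightarrow> symp (compl_graph n E)"
  by (auto simp: symp_def compl_graph_def)

lemma lower_compl_neighbours:
  "symp E \<Longrightarrow> j \<le> n \<Longrightarrow> {v \<in> {1..j - 1}. compl_graph n E v j} = {i \<in> {1..<j}. \<not> E j i}"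
  by (auto simp: compl_graph_def symp_swap_iff[of E])

lemma interval_closed_lower_clique:
  assumes "interval_closed H" "symp H" "H a j" "H b j" "a < j" "b < j" "a \<noteq> b"
  shows "H a b"
proof -
  have lower: "H a b" if "a < b" "b < j" "H a j" for a b
    using assms(1) that unfolding interval_closed_def by (meson less_imp_le less_trans order_refl)
  consider "a < b" | "b < a"
    using assms(7) by linarith
  then show ?thesis
  proof cases
    case 2
    then have "H b a"
      using lower assms(4,5) by blast
    with assms(2) show ?thesis
      by (rule sympD)
  qed (use lower assms(3,6) in blast)
qed

lemma lower_adj_mono_if_interval_closed:
  assumes "symp E" "interval_closed (compl_graph n E)" "j \<le> n"
  shows "lower_adj_mono E j"
  unfolding lower_adj_mono_def
proof (intro allI impI)
  fix x y assume xy: "1 \<le> y" "y < x" "x < j" "E x y"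
  show "E j y"
  proof (rule ccontr)
    assume "\<not> E j y"
    then have "compl_graph n E y j"
      using xy assms(3) by (auto simp: compl_graph_def symp_swap_iff[OF assms(1)])
    then have "compl_graph n E y x"
      using assms(2) xy unfolding interval_closed_def by (meson less_imp_le less_trans order_refl)
    then show False
      using xy by (auto simp: compl_graph_def symp_swap_iff[OF assms(1)])
  qed
qed

lemma num_colorings_compl_graph:
  assumes "symp E" "interval_closed (compl_graph n E)" "j \<le> n"
  shows "(of_nat (num_colorings {1..j} (compl_graph n E) k) :: 'a::comm_ring_1)
       = (\<Prod>i\<in>{1..j}. of_nat k - of_nat (lower_nonadj E i))"
  using assms(3)
proof (induction j)
  case 0
  then show ?case by (simp add: num_colorings_def)
next
  case (Suc j)
  define N where "N = {v \<in> {1..j}. compl_graph n E v (Suc j)}"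
  let ?C = "\<lambda>j. proper_colourings {1..j} (compl_graph n E) k"
  have clique: "\<forall>a\<in>N. \<forall>b\<in>N. a \<noteq> b \<longrightarrow> compl_graph n E a b"
  proof (intro ballI impI)
    fix a b assume "a \<in> N" "b \<in> N" "a \<noteq> b"
    then show "compl_graph n E a b"
      by (intro interval_closed_lower_clique[OF assms(2) symp_compl_graph[OF assms(1)], of a "Suc j" b])
        (auto simp: N_def)
  qed
  have card_N: "card N = lower_nonadj E (Suc j)"
    unfolding N_def lower_nonadj_def using lower_compl_neighbours[OF assms(1) Suc.prems] by simp
  have "{1..Suc j} = insert (Suc j) {1..j}"
    by auto
  then have "card (?C (Suc j)) = card (?C j) * (k - lower_nonadj E (Suc j))"
    using card_proper_colourings_insert[OF finite_atLeastAtMost _ symp_compl_graph[OF assms(1)] _ clique N_def, of k]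
    by (simp add: card_N compl_graph_def[of n E "Suc j" "Suc j"])
  moreover have "lower_nonadj E (Suc j) \<le> k" if "c \<in> ?C j" for c
    using card_clique_le_colours[OF that _ clique] card_N unfolding N_def by fastforce
  moreover have "of_nat (card (?C j)) = (\<Prod>i\<in>{1..j}. of_nat k - of_nat (lower_nonadj E i) :: 'a)"
    using Suc by (simp add: num_colorings_def proper_colourings_def)
  moreover have "(\<Prod>i\<in>{1..Suc j}. of_nat k - of_nat (lower_nonadj E i) :: 'a)
      = (\<Prod>i\<in>{1..j}. of_nat k - of_nat (lower_nonadj E i)) * (of_nat k - of_nat (lower_nonadj E (Suc j)))"
    by (simp add: \<open>{1..Suc j} = insert (Suc j) {1..j}\<close> mult.commute)
  ultimately show ?case
    unfolding num_colorings_def proper_colourings_def[symmetric]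
    by (cases "?C j = {}") (auto simp: of_nat_diff)
qed

lemma poly_eqI_of_nat:
  fixes p q :: "'a::{idom, ring_char_0} poly"
  assumes "\<And>k::nat. poly p (of_nat k) = poly q (of_nat k)"
  shows "p = q"
proof (rule ccontr)
  assume "p \<noteq> q"
  moreover have "range (of_nat :: nat \<Rightarrow> 'a) \<subseteq> {x. poly (p - q) x = 0}"
    using assms by auto
  moreover have "infinite (range (of_nat :: nat \<Rightarrow> 'a))"
    by (rule range_inj_infinite) (simp add: inj_of_nat)
  ultimately show False
    using poly_roots_finite[of "p - q"] finite_subset by auto
qed

lemma chromatic_poly_compl_graph:
  assumes "symp E" "interval_closed (compl_graph n E)"
  shows "chromatic_poly {1..n} (compl_graph n E) = (\<Prod>i\<in>{1..n}. [:- of_nat (lower_nonadj E i), 1:])"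
proof -
  have poly_at_nat: "poly (\<Prod>i\<in>{1..n}. [:- of_nat (lower_nonadj E i), 1:]) (of_nat k)
      = (of_nat (num_colorings {1..n} (compl_graph n E) k) :: rat)" for k
  proof -
    have "poly (\<Prod>i\<in>{1..n}. [:- of_nat (lower_nonadj E i), 1:]) (of_nat k)
        = (\<Prod>i\<in>{1..n}. of_nat k - of_nat (lower_nonadj E i) :: rat)"
      unfolding poly_prod by (intro prod.cong) simp_all
    also have "\<dots> = of_nat (num_colorings {1..n} (compl_graph n E) k)"
      by (rule num_colorings_compl_graph[OF assms order_refl, symmetric])
    finally show ?thesis .
  qed
  show ?thesis
    unfolding chromatic_poly_def
  proof (rule the_equality)
    fix p :: "rat poly"
    assume "\<forall>k::nat. poly p (of_nat k) = of_nat (num_colorings {1..n} (compl_graph n E) k)"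
    then show "p = (\<Prod>i\<in>{1..n}. [:- of_nat (lower_nonadj E i), 1:])"
      using poly_at_nat by (intro poly_eqI_of_nat) simp
  qed (use poly_at_nat in blast)
qed

lemma Q_poly_compl_graph:
  assumes "symp E" "interval_closed (compl_graph n E)" "1 \<le> n"
  shows "Q_poly n E = smult ((-1) ^ n) (\<Prod>i\<in>{2..n}. [:of_nat (lower_nonadj E i), 1:])"
proof -
  have "chromatic_poly {1..n} (compl_graph n E) \<circ>\<^sub>p [:0, -1:]
      = (\<Prod>i\<in>{1..n}. smult (-1) [:of_nat (lower_nonadj E i), 1:])"
    unfolding chromatic_poly_compl_graph[OF assms(1,2)] pcompose_prod
    by (intro prod.cong) (simp_all add: pcompose_pCons)
  also have "\<dots> = smult ((-1) ^ n) (\<Prod>i\<in>{1..n}. [:of_nat (lower_nonadj E i), 1:])"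
    unfolding prod_smult prod_constant by simp
  also have "(\<Prod>i\<in>{1..n}. [:of_nat (lower_nonadj E i), 1:])
      = [:0, 1:] * (\<Prod>i\<in>{2..n}. [:of_nat (lower_nonadj E i), 1::rat:])"
  proof -
    have "{1..n} = insert 1 {2..n}"
      using assms(3) by auto
    then show ?thesis
      by (simp add: lower_nonadj_def)
  qed
  finally have compose: "chromatic_poly {1..n} (compl_graph n E) \<circ>\<^sub>p [:0, -1:]
      = [:0, 1:] * smult ((-1) ^ n) (\<Prod>i\<in>{2..n}. [:of_nat (lower_nonadj E i), 1:])"
    by simp
  show ?thesis
    unfolding Q_poly_def compose by (rule nonzero_mult_div_cancel_left) simp
qed

theorem mainTheorem17:
  fixes n :: nat and E :: "nat \<Rightarrow> nat \<Rightarrow> bool"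
  assumes "n \<ge> 1"
    and "simple_graph_on n E"
    and "\<forall>i j. i < j \<and> compl_graph n E i j \<longrightarrow>
           (\<forall>a b. i \<le> a \<and> a < b \<and> b \<le> j \<longrightarrow> compl_graph n E a b)"
  shows "fps_of_poly (cyc_eulerian n E) / (1 - fps_X) ^ n
       = fps_const ((-1) ^ n * of_nat n) * Abs_fps (\<lambda>m. poly (Q_poly n E) (of_nat m))"
proof -
  have sym: "symp E"
    using assms(2) by (auto simp: simple_graph_on_def symp_def)
  have interval: "interval_closed (compl_graph n E)"
    using assms(3) by (simp add: interval_closed_def)
  have "fps_of_poly (cyc_eulerian n E) = of_nat n * lower_nonadj_fps E n * (1 - fps_X) ^ n"
    using fps_cyc_eulerian[OF assms(1)] rooted_cdes_fps_eq[OF assms(1)]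
      lower_adj_mono_if_interval_closed[OF sym interval]
    by (simp add: mult.assoc)
  then have "fps_of_poly (cyc_eulerian n E) / (1 - fps_X) ^ n = of_nat n * lower_nonadj_fps E n"
    by simp
  moreover have "(-1::rat) ^ n * (-1) ^ n = 1"
    by (simp flip: power_add)
  ultimately show ?thesis
    by (intro fps_ext) (simp add: Q_poly_compl_graph[OF sym interval assms(1)] lower_nonadj_fps_def
        poly_prod fps_of_nat add.commute mult.assoc[symmetric])
qed

end
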